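(* Let $T\subseteq\mathbb{R}^2$ be a closed convex set and let $R>r>0$. Then \[ \int_{D(R,r)\cap\partial T}\|x\|^{-1}\,\mathrm{d}x\le 4\pi\lceil\log_2(R/r)\rceil, \] where the integral is with respect to one-dimensional length measure.
   Context: $D(R,r)=R\mathbb{B}_2^2\setminus r\mathbb{B}_2^2$, where $\mathbb{B}_2^2$ is the closed Euclidean unit disk. $\partial T$ denotes the boundary of $T$ relative to the linear span of $T$. *)

theory Defs
  imports "HOL-Analysis.Analysis"
begin

definition annulus :: "real \<Rightarrow> real \<Rightarrow> (real^2) set" where
  "annulus R r = cball 0 R - cball 0 r"

definition span_boundary :: "(real^2) set \<Rightarrow> (real^2) set" where
  "span_boundary T = closure T - {x \<in> T. \<exists>e>0. ball x e \<inter> span T \<subseteq> T}"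

definition hausdorff1_delta :: "real \<Rightarrow> (real^2) set \<Rightarrow> ennreal" where
  "hausdorff1_delta \<delta> A =
     (INF C \<in> {C :: nat \<Rightarrow> (real^2) set. A \<subseteq> (\<Union>i. C i) \<and>
                (\<forall>i. bounded (C i) \<and> diameter (C i) \<le> \<delta>)}.
        (\<Sum>i. ennreal (diameter (C i))))"

text \<open>One-dimensional Hausdorff outer measure (normalised so that it is length).\<close>
definition hausdorff1_outer :: "(real^2) set \<Rightarrow> ennreal" where
  "hausdorff1_outer A = (SUP \<delta> \<in> {0<..}. hausdorff1_delta \<delta> A)"

definition hausdorff1 :: "(real^2) measure" where
  "hausdorff1 = measure_of UNIV (lambda_system UNIV UNIV hausdorff1_outer) hausdorff1_outer"

end

theory Submission
  imports Defs
begin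

text \<open>
  Cut the annulus into the dyadic shells \<open>2^k r < \<parallel>x\<parallel> \<le> 2^(k+1) r\<close>, \<open>k < \<lceil>log\<^sub>2 (R/r)\<rceil>\<close>.
  On the k-th shell the integrand is at most \<open>1/(2^k r)\<close>, and the part of \<open>\<partial>T\<close> inside the
  disk of radius \<open>\<rho> = 2^(k+1) r\<close> has length at most \<open>2\<pi>\<rho>\<close>: the nearest-point map onto the
  convex set \<open>T \<inter> \<rho>B\<close> is 1-Lipschitz, and every boundary point of T in \<open>\<rho>B\<close> is the image of
  the point where its outer normal ray leaves \<open>\<rho>B\<close>. So each shell contributes at most \<open>4\<pi>\<close>.
  Since \<open>\<partial>T\<close> need not be measurable, the integral is estimated through the simple functions
  below the integrand, whose level sets are measurable.
\<close>

lemma hausdorff1_delta_mono: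
  assumes "A \<subseteq> B"
  shows "hausdorff1_delta \<delta> A \<le> hausdorff1_delta \<delta> B"
  unfolding hausdorff1_delta_def
  by (rule INF_superset_mono) (use assms in auto)

lemma hausdorff1_outer_mono:
  assumes "A \<subseteq> B"
  shows "hausdorff1_outer A \<le> hausdorff1_outer B"
  unfolding hausdorff1_outer_def
  by (rule SUP_mono) (use hausdorff1_delta_mono[OF assms] in blast)

lemma emeasure_hausdorff1_le_outer: "emeasure hausdorff1 A \<le> hausdorff1_outer A"
  unfolding hausdorff1_def emeasure_measure_of_conv by auto

lemma obtain_equal_subinterval:
  fixes a h t :: real and m :: nat
  assumes "0 < m" "0 \<le> h" "a \<le> t" "t \<le> a + m * h"
  obtains i where "i < m" "a + i * h \<le> t" "t \<le> a + i * h + h"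
proof (cases "t = a + m * h")
  case True
  with assms show ?thesis
    by (intro that[of "m - 1"]) (auto simp: of_nat_diff algebra_simps)
next
  case False
  with assms have "0 < h" by (cases "h = 0") auto
  define i where "i = nat \<lfloor>(t - a) / h\<rfloor>"
  have "0 \<le> (t - a) / h" using assms \<open>0 < h\<close> by simp
  then have i: "real i \<le> (t - a) / h" "(t - a) / h < real i + 1"
    unfolding i_def by linarith+
  have "(t - a) / h < m" using assms False \<open>0 < h\<close> by (simp add: field_simps)
  with i have "i < m" by linarith
  moreover have "a + i * h \<le> t" "t \<le> a + i * h + h"
    using i \<open>0 < h\<close> by (simp_all add: field_simps)
  ultimately show ?thesis by (rule that)
qed

lemma hausdorff1_outer_lipschitz_image_le:
  fixes \<gamma> :: "real \<Rightarrow> real^2"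
  assumes "L-lipschitz_on {a..b} \<gamma>" "a \<le> b"
  shows "hausdorff1_outer (\<gamma> ` {a..b}) \<le> ennreal (L * (b - a))"
  unfolding hausdorff1_outer_def
proof (rule SUP_least)
  fix \<delta> :: real assume "\<delta> \<in> {0<..}"
  then have "0 < \<delta>" by simp
  obtain m :: nat where m: "L * (b - a) / \<delta> < m"
    using reals_Archimedean2 by blast
  have L: "0 \<le> L" using assms(1) by (rule lipschitz_on_nonneg)
  have "0 \<le> L * (b - a) / \<delta>" using L assms(2) \<open>0 < \<delta>\<close> by simp
  with m have "0 < m" by linarith
  define h where "h = (b - a) / m"
  define P where "P i = {a + i * h .. a + i * h + h} \<inter> {a..b}" for i :: nat
  define C where "C i = (if i < m then \<gamma> ` P i else {})" for i
  have Lh: "L * h \<le> \<delta>"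
    using m \<open>0 < m\<close> \<open>0 < \<delta>\<close> by (simp add: h_def field_simps)
  have "0 \<le> h" using assms(2) by (simp add: h_def)
  have diam: "diameter (C i) \<le> L * h" for i
  proof (rule diameter_le)
    show "C i \<noteq> {} \<or> 0 \<le> L * h" using L \<open>0 \<le> h\<close> by simp
    fix u v assume "u \<in> C i" "v \<in> C i"
    then obtain s t where st: "s \<in> P i" "t \<in> P i" "u = \<gamma> s" "v = \<gamma> t"
      by (auto simp: C_def split: if_splits)
    have "dist u v \<le> L * dist s t"
      unfolding st(3,4) by (rule lipschitz_onD[OF assms(1)]) (use st(1,2) in \<open>auto simp only: P_def\<close>)
    also have "\<dots> \<le> L * h"
      using st L by (intro mult_left_mono) (auto simp: P_def dist_real_def algebra_simps)
    finally show "norm (u - v) \<le> L * h" by (simp add: dist_norm)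
  qed
  have bounded: "bounded (C i)" for i
  proof -
    have "continuous_on (P i) \<gamma>"
      using lipschitz_on_continuous_on lipschitz_on_subset assms(1) by (metis P_def inf_le2)
    then show ?thesis
      by (auto simp: C_def P_def intro: compact_imp_bounded compact_continuous_image)
  qed
  have cover: "\<gamma> ` {a..b} \<subseteq> (\<Union>i. C i)"
  proof
    fix x assume "x \<in> \<gamma> ` {a..b}"
    then obtain t where t: "t \<in> {a..b}" "x = \<gamma> t" by blast
    have "b = a + m * h" using \<open>0 < m\<close> by (simp add: h_def)
    then obtain i where "i < m" "a + i * h \<le> t" "t \<le> a + i * h + h"
      using obtain_equal_subinterval[OF \<open>0 < m\<close> \<open>0 \<le> h\<close>] t(1) by auto
    with t have "x \<in> C i" by (auto simp: C_def P_def)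
    then show "x \<in> (\<Union>i. C i)" by blast
  qed
  have "diameter (C i) \<le> \<delta>" for i using diam Lh by (rule order_trans)
  then have "hausdorff1_delta \<delta> (\<gamma> ` {a..b}) \<le> (\<Sum>i. ennreal (diameter (C i)))"
    unfolding hausdorff1_delta_def using cover bounded by (intro INF_lower) auto
  also have "\<dots> = (\<Sum>i<m. ennreal (diameter (C i)))"
    by (rule suminf_finite) (auto simp: C_def)
  also have "\<dots> \<le> (\<Sum>i<m. ennreal (L * h))"
    by (intro sum_mono ennreal_leI diam)
  also have "\<dots> = ennreal (\<Sum>i<m. L * h)"
    using L \<open>0 \<le> h\<close> by (intro sum_ennreal) auto
  also have "(\<Sum>i<m. L * h) = L * (b - a)"
    using \<open>0 < m\<close> by (simp add: h_def)
  finally show "hausdorff1_delta \<delta> (\<gamma> ` {a..b}) \<le> ennreal (L * (b - a))" .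
qed

definition circle_path :: "real \<Rightarrow> real \<Rightarrow> real^2" where
  "circle_path \<rho> t = vector [\<rho> * cos t, \<rho> * sin t]"

lemma norm_vec2: "norm (x :: real^2) = sqrt ((x$1)\<^sup>2 + (x$2)\<^sup>2)"
  by (simp add: norm_eq_sqrt_inner inner_vec_def sum_2 power2_eq_square)

lemma dist_circle_path:
  assumes "0 \<le> \<rho>"
  shows "dist (circle_path \<rho> s) (circle_path \<rho> t) = 2 * \<rho> * \<bar>sin ((s - t) / 2)\<bar>"
proof -
  have "cos (s - t) = 1 - 2 * (sin ((s - t) / 2))\<^sup>2"
    using cos_double_sin[of "(s - t) / 2"] by (simp only: mult_2 field_sum_of_halves)
  then have chord: "(cos s - cos t)\<^sup>2 + (sin s - sin t)\<^sup>2 = (2 * sin ((s - t) / 2))\<^sup>2"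
    by (simp add: cos_diff power2_eq_square algebra_simps)
  have "dist (circle_path \<rho> s) (circle_path \<rho> t)
          = sqrt (\<rho>\<^sup>2 * ((cos s - cos t)\<^sup>2 + (sin s - sin t)\<^sup>2))"
    unfolding dist_norm norm_vec2 circle_path_def
    by (simp add: power_mult_distrib distrib_left flip: right_diff_distrib)
  also have "\<dots> = 2 * \<rho> * \<bar>sin ((s - t) / 2)\<bar>"
    using assms by (simp add: chord real_sqrt_mult abs_mult)
  finally show ?thesis .
qed

lemma lipschitz_on_circle_path:
  assumes "0 \<le> \<rho>"
  shows "\<rho>-lipschitz_on S (circle_path \<rho>)"
proof (rule lipschitz_onI)
  fix s t
  have "2 * \<rho> * \<bar>sin ((s - t) / 2)\<bar> \<le> 2 * \<rho> * \<bar>(s - t) / 2\<bar>"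
    using assms by (intro mult_left_mono abs_sin_x_le_abs_x) auto
  with assms show "dist (circle_path \<rho> s) (circle_path \<rho> t) \<le> \<rho> * dist s t"
    by (simp add: dist_circle_path dist_real_def)
qed (rule assms)

lemma sphere_subset_circle_path_image:
  assumes "0 < \<rho>"
  shows "sphere (0 :: real^2) \<rho> \<subseteq> circle_path \<rho> ` {0..2*pi}"
proof
  fix x :: "real^2" assume "x \<in> sphere 0 \<rho>"
  then have "sqrt ((x$1)\<^sup>2 + (x$2)\<^sup>2) = \<rho>" by (simp add: norm_vec2)
  then have "(x$1)\<^sup>2 + (x$2)\<^sup>2 = \<rho>\<^sup>2"
    by (metis real_sqrt_pow2 add_nonneg_nonneg zero_le_power2)
  then have "(x$1 / \<rho>)\<^sup>2 + (x$2 / \<rho>)\<^sup>2 = 1"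
    using assms by (simp add: power_divide flip: add_divide_distrib)
  then obtain t where t: "0 \<le> t" "t < 2*pi" "x$1 / \<rho> = cos t" "x$2 / \<rho> = sin t"
    by (rule sincos_total_2pi)
  then have "x = circle_path \<rho> t"
    using assms unfolding circle_path_def vec_eq_iff forall_2 by (auto simp: field_simps)
  with t show "x \<in> circle_path \<rho> ` {0..2*pi}" by auto
qed

lemma convex_frontier_supporting_hyperplane:
  fixes T :: "'a::euclidean_space set"
  assumes "convex T" "y \<in> T" "y \<in> frontier T"
  obtains a where "a \<noteq> 0" "\<And>z. z \<in> T \<Longrightarrow> a \<bullet> z \<le> a \<bullet> y"
proof (cases "interior T = {}")
  case True
  then obtain a b where "a \<noteq> 0" and T: "T \<subseteq> {x. a \<bullet> x = b}"
    using empty_interior_subset_hyperplane[OF assms(1)] by metis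
  moreover have "a \<bullet> z = a \<bullet> y" if "z \<in> T" for z
    using subsetD[OF T that] subsetD[OF T assms(2)] by simp
  ultimately show ?thesis using that by force
next
  case False
  then have "y \<notin> rel_interior T"
    using assms(3) by (simp add: rel_interior_nonempty_interior frontier_def)
  then obtain a where "a \<noteq> 0" "\<And>z. z \<in> T \<Longrightarrow> a \<bullet> y \<le> a \<bullet> z"
    using supporting_hyperplane_rel_boundary[OF assms(1,2)] by metis
  then show ?thesis using that[of "- a"] by auto
qed

lemma closest_point_eqI:
  fixes K :: "'a::euclidean_space set"
  assumes "convex K" "closed K" "y \<in> K" "\<And>z. z \<in> K \<Longrightarrow> (x - y) \<bullet> (z - y) \<le> 0"
  shows "closest_point K x = y"
proof -
  have "dist x y \<le> dist x z" if "z \<in> K" for z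
  proof -
    have "(dist x z)\<^sup>2 = (dist x y)\<^sup>2 - 2 * ((x - y) \<bullet> (z - y)) + (norm (z - y))\<^sup>2"
    proof -
      have "x - z = (x - y) - (z - y)" by simp
      then show ?thesis unfolding dist_norm power2_norm_eq_inner
        by (simp add: inner_diff_left inner_diff_right inner_commute algebra_simps)
    qed
    with assms(4)[OF that] have "(dist x y)\<^sup>2 \<le> (dist x z)\<^sup>2"
      using zero_le_power2[of "norm (z - y)"] by linarith
    then show ?thesis by (rule power2_le_imp_le) simp
  qed
  then show ?thesis using closest_point_unique[OF assms(1-3)] by simp
qed

lemma frontier_in_closest_point_image_sphere:
  fixes T :: "'a::euclidean_space set"
  assumes "convex T" "closed T" "y \<in> frontier T" "norm y \<le> \<rho>"
  shows "y \<in> closest_point (T \<inter> cball 0 \<rho>) ` sphere 0 \<rho>"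
proof -
  have "y \<in> T" using assms(2,3) frontier_subset_closed by blast
  then obtain a where a: "a \<noteq> 0" "\<And>z. z \<in> T \<Longrightarrow> a \<bullet> z \<le> a \<bullet> y"
    using convex_frontier_supporting_hyperplane[OF assms(1) _ assms(3)] by blast
  define u where "u = a /\<^sub>R norm a"
  have "norm u = 1" using a(1) by (simp add: u_def)
  have u: "u \<bullet> z \<le> u \<bullet> y" if "z \<in> T" for z
    using a(2)[OF that] by (simp add: u_def mult_left_mono)
  have "0 \<le> \<rho>" using norm_ge_zero assms(4) by (rule order_trans)
  text \<open>Follow the outer normal from y until the sphere is reached.\<close>
  have "\<exists>t. 0 \<le> t \<and> t \<le> \<rho> + norm y \<and> norm (y + t *\<^sub>R u) = \<rho>"
  proof (rule IVT')
    have "\<rho> + norm y - norm y \<le> norm (y + (\<rho> + norm y) *\<^sub>R u)"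
      using norm_triangle_ineq2[of "(\<rho> + norm y) *\<^sub>R u" "- y"] \<open>norm u = 1\<close> assms(4)
      by (simp add: add.commute)
    then show "\<rho> \<le> norm (y + (\<rho> + norm y) *\<^sub>R u)" by simp
  qed (use \<open>0 \<le> \<rho>\<close> assms(4) in \<open>auto intro!: continuous_intros add_nonneg_nonneg\<close>)
  then obtain t where t: "0 \<le> t" "norm (y + t *\<^sub>R u) = \<rho>" by blast
  have "closest_point (T \<inter> cball 0 \<rho>) (y + t *\<^sub>R u) = y"
  proof (rule closest_point_eqI)
    fix z assume "z \<in> T \<inter> cball 0 \<rho>"
    then have "t * (u \<bullet> z - u \<bullet> y) \<le> 0"
      using u t(1) by (simp add: mult_nonneg_nonpos)
    then show "(y + t *\<^sub>R u - y) \<bullet> (z - y) \<le> 0"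
      by (simp add: inner_diff_right right_diff_distrib)
  qed (use assms \<open>y \<in> T\<close> in \<open>auto intro: convex_Int closed_Int\<close>)
  with t(2) show ?thesis by force
qed

lemma hausdorff1_outer_frontier_cball_le:
  fixes T :: "(real^2) set"
  assumes "convex T" "closed T" "0 < \<rho>"
  shows "hausdorff1_outer (frontier T \<inter> cball 0 \<rho>) \<le> ennreal (2 * pi * \<rho>)"
proof -
  have L: "\<rho>-lipschitz_on {0..2*pi} (circle_path \<rho>)"
    using assms(3) by (simp add: lipschitz_on_circle_path)
  obtain \<gamma> where \<gamma>: "\<rho>-lipschitz_on {0..2*pi} \<gamma>" "frontier T \<inter> cball 0 \<rho> \<subseteq> \<gamma> ` {0..2*pi}"
  proof (cases "frontier T \<inter> cball 0 \<rho> = {}")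
    case True
    with L show ?thesis using that by blast
  next
    case False
    define K where "K = T \<inter> cball 0 \<rho>"
    have "K \<noteq> {}" using False frontier_subset_closed[OF assms(2)] by (auto simp: K_def)
    moreover have "convex K" "closed K"
      using assms by (auto simp: K_def intro: convex_Int closed_Int)
    ultimately have cp: "1-lipschitz_on UNIV (closest_point K)"
      by (auto intro!: lipschitz_onI closest_point_lipschitz)
    have "(1 * \<rho>)-lipschitz_on {0..2*pi} (closest_point K \<circ> circle_path \<rho>)"
      by (rule lipschitz_on_compose[OF L lipschitz_on_subset[OF cp subset_UNIV]])
    moreover have "frontier T \<inter> cball 0 \<rho> \<subseteq> (closest_point K \<circ> circle_path \<rho>) ` {0..2*pi}"
      using frontier_in_closest_point_image_sphere[OF assms(1,2)]
        sphere_subset_circle_path_image[OF assms(3)]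
      by (fastforce simp: K_def image_comp[symmetric])
    ultimately show ?thesis using that by simp
  qed
  have "hausdorff1_outer (frontier T \<inter> cball 0 \<rho>) \<le> hausdorff1_outer (\<gamma> ` {0..2*pi})"
    using \<gamma>(2) by (rule hausdorff1_outer_mono)
  also have "\<dots> \<le> ennreal (\<rho> * (2 * pi - 0))"
    using \<gamma>(1) by (rule hausdorff1_outer_lipschitz_image_le) simp
  finally show ?thesis by (simp add: mult.commute mult.left_commute)
qed

lemma emeasure_hausdorff1_frontier_cball_le:
  fixes T :: "(real^2) set"
  assumes "convex T" "closed T" "0 < \<rho>" "E \<subseteq> frontier T \<inter> cball 0 \<rho>"
  shows "emeasure hausdorff1 E \<le> ennreal (2 * pi * \<rho>)"
proof -
  have "emeasure hausdorff1 E \<le> hausdorff1_outer E"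
    by (rule emeasure_hausdorff1_le_outer)
  also have "\<dots> \<le> hausdorff1_outer (frontier T \<inter> cball 0 \<rho>)"
    using assms(4) by (rule hausdorff1_outer_mono)
  also have "\<dots> \<le> ennreal (2 * pi * \<rho>)"
    using assms(1-3) by (rule hausdorff1_outer_frontier_cball_le)
  finally show ?thesis .
qed

lemma inverse_norm_level_subset_cball:
  fixes S :: "'a::real_normed_vector set"
  assumes "0 < r" "S \<subseteq> {x. r < norm x \<and> norm x \<le> 2 ^ N * r}"
  shows "{x. 0 < ennreal (1 / norm x) * indicator S x \<and>
            (Suc k = N \<or> ennreal (1 / (2 ^ Suc k * r)) < ennreal (1 / norm x) * indicator S x)}
         \<subseteq> S \<inter> cball 0 (2 ^ Suc k * r)"
proof
  fix x assume "x \<in> {x. 0 < ennreal (1 / norm x) * indicator S x \<and>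
            (Suc k = N \<or> ennreal (1 / (2 ^ Suc k * r)) < ennreal (1 / norm x) * indicator S x)}"
  then have pos: "0 < ennreal (1 / norm x) * indicator S x"
    and level: "Suc k = N \<or> ennreal (1 / (2 ^ Suc k * r)) < ennreal (1 / norm x) * indicator S x"
    by auto
  have "x \<in> S" using pos by (cases "x \<in> S") simp_all
  with assms have "r < norm x" "norm x \<le> 2 ^ N * r" by auto
  then have "0 < norm x" using \<open>0 < r\<close> by linarith
  from level \<open>x \<in> S\<close> \<open>0 < r\<close> have "Suc k = N \<or> 1 / (2 ^ Suc k * r) < 1 / norm x"
    by (simp add: ennreal_less_iff)
  then have "norm x \<le> 2 ^ Suc k * r"
  proof
    assume "1 / (2 ^ Suc k * r) < 1 / norm x"
    with \<open>0 < norm x\<close> \<open>0 < r\<close> show ?thesis by (simp add: divide_less_eq)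
  qed (use \<open>norm x \<le> 2 ^ N * r\<close> in simp)
  with \<open>x \<in> S\<close> show "x \<in> S \<inter> cball 0 (2 ^ Suc k * r)" by simp
qed

lemma span_boundary_subset_frontier: "span_boundary T \<subseteq> frontier T"
proof
  fix x assume x: "x \<in> span_boundary T"
  have "x \<notin> interior T"
  proof
    assume "x \<in> interior T"
    then obtain e where e: "0 < e" "ball x e \<subseteq> T" by (meson mem_interior)
    then have "x \<in> T" by (meson centre_in_ball subsetD)
    with x e show False unfolding span_boundary_def by blast
  qed
  with x show "x \<in> frontier T" by (simp add: span_boundary_def frontier_def)
qed

lemma obtain_last_level:
  fixes c :: "nat \<Rightarrow> 'a::linorder"
  assumes "y \<le> c 0" "0 < N"
  obtains k where "k < N" "y \<le> c k" "Suc k = N \<or> c (Suc k) < y"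
proof -
  define K where "K = {k. k < N \<and> y \<le> c k}"
  have K: "j \<in> K \<longleftrightarrow> j < N \<and> y \<le> c j" for j by (simp add: K_def)
  have "finite K" by (simp add: K_def)
  moreover have "0 \<in> K" using assms by (simp add: K)
  ultimately
  have "Max K \<in> K" and max: "\<And>j. j \<in> K \<Longrightarrow> j \<le> Max K"
    by (auto intro: Max_in)
  moreover have "Suc (Max K) = N \<or> c (Suc (Max K)) < y"
  proof (rule disjCI)
    assume "\<not> c (Suc (Max K)) < y"
    moreover have "Suc (Max K) \<notin> K" using max[of "Suc (Max K)"] by auto
    ultimately show "Suc (Max K) = N" using \<open>Max K \<in> K\<close> by (auto simp: K not_less)
  qed
  ultimately show ?thesis by (intro that[of "Max K"]) (auto simp: K)
qed

lemma nn_integral_le_sum_levels: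
  fixes F :: "'a \<Rightarrow> ennreal" and c :: "nat \<Rightarrow> real" and b :: "nat \<Rightarrow> ennreal"
  assumes "0 < N" and F_le: "\<And>x. F x \<le> ennreal (c 0)"
    and level: "\<And>k E. k < N \<Longrightarrow> E \<in> sets M \<Longrightarrow>
        E \<subseteq> {x. 0 < F x \<and> (Suc k = N \<or> ennreal (c (Suc k)) < F x)} \<Longrightarrow> emeasure M E \<le> b k"
  shows "integral\<^sup>N M F \<le> (\<Sum>k<N. ennreal (c k) * b k)"
  unfolding nn_integral_def
proof (rule SUP_least)
  fix g assume "g \<in> {g. simple_function M g \<and> g \<le> F}"
  then have g: "simple_function M g" "\<And>x. g x \<le> F x" by (auto simp: le_fun_def)
  define U where
    "U k = {x \<in> space M. 0 < g x \<and> g x \<le> c k \<and> (Suc k = N \<or> ennreal (c (Suc k)) < g x)}" for k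
  have U: "U k \<in> sets M" for k
  proof -
    have "U k = g -` {y. 0 < y \<and> y \<le> c k \<and> (Suc k = N \<or> ennreal (c (Suc k)) < y)} \<inter> space M"
      by (auto simp: U_def)
    also have "\<dots> \<in> sets M" by (rule simple_functionD(2)[OF g(1)])
    finally show ?thesis .
  qed
  have g_le: "g x \<le> (\<Sum>k<N. ennreal (c k) * indicator (U k) x)" if "x \<in> space M" for x
  proof (cases "g x = 0")
    case False
    have "g x \<le> c 0" using g(2) F_le by (rule order_trans)
    then obtain k where k: "k < N" "g x \<le> c k" "Suc k = N \<or> ennreal (c (Suc k)) < g x"
      using obtain_last_level[of "g x" "\<lambda>k. ennreal (c k)"] \<open>0 < N\<close> by blast
    with False that have "g x \<le> ennreal (c k) * indicator (U k) x"
      by (simp add: U_def zero_less_iff_neq_zero)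
    also have "\<dots> \<le> (\<Sum>k<N. ennreal (c k) * indicator (U k) x)"
      using k(1) by (intro member_le_sum) auto
    finally show ?thesis .
  qed simp
  have "integral\<^sup>S M g = integral\<^sup>N M g"
    by (rule nn_integral_eq_simple_integral[OF g(1), symmetric])
  also have "\<dots> \<le> (\<integral>\<^sup>+ x. (\<Sum>k<N. ennreal (c k) * indicator (U k) x) \<partial>M)"
    by (rule nn_integral_mono) (rule g_le)
  also have "\<dots> = (\<Sum>k<N. \<integral>\<^sup>+ x. ennreal (c k) * indicator (U k) x \<partial>M)"
    using U by (intro nn_integral_sum) simp
  also have "\<dots> = (\<Sum>k<N. ennreal (c k) * emeasure M (U k))"
    using U by (simp add: nn_integral_cmult_indicator)
  also have "\<dots> \<le> (\<Sum>k<N. ennreal (c k) * b k)"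
  proof (intro sum_mono mult_left_mono)
    fix k assume "k \<in> {..<N}"
    moreover have "U k \<subseteq> {x. 0 < F x \<and> (Suc k = N \<or> ennreal (c (Suc k)) < F x)}"
      using g(2) by (auto simp: U_def intro: less_le_trans order.strict_trans2)
    ultimately show "emeasure M (U k) \<le> b k" using U by (intro level) auto
  qed simp
  finally show "integral\<^sup>S M g \<le> (\<Sum>k<N. ennreal (c k) * b k)" .
qed

theorem lemma4p19:
  fixes T :: "(real^2) set" and R r :: real
  assumes "closed T" and "convex T" and "0 < r" and "r < R"
  shows "(\<integral>\<^sup>+ x \<in> annulus R r \<inter> span_boundary T. ennreal (1 / norm x) \<partial>hausdorff1)
           \<le> ennreal (4 * pi * real_of_int \<lceil>log 2 (R / r)\<rceil>)"
proof -
  define N where "N = nat \<lceil>log 2 (R / r)\<rceil>"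
  define S where "S = annulus R r \<inter> span_boundary T"
  have "0 < log 2 (R / r)" using assms by simp
  then have "0 < N" and N: "real_of_int \<lceil>log 2 (R / r)\<rceil> = real N" by (auto simp: N_def)
  have "log 2 (R / r) \<le> real N" using N by linarith
  then have "R \<le> 2 ^ N * r"
    using assms by (simp add: log_le_iff powr_realpow field_simps)
  then have S: "S \<subseteq> {x. r < norm x \<and> norm x \<le> 2 ^ N * r}" "S \<subseteq> frontier T"
    using span_boundary_subset_frontier by (auto simp: S_def annulus_def)
  have "(\<integral>\<^sup>+ x \<in> S. ennreal (1 / norm x) \<partial>hausdorff1)
          \<le> (\<Sum>k<N. ennreal (1 / (2 ^ k * r)) * ennreal (2 * pi * (2 ^ Suc k * r)))"
  proof (rule nn_integral_le_sum_levels[OF \<open>0 < N\<close>, where c = "\<lambda>k. 1 / (2 ^ k * r)"])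
    show "ennreal (1 / norm x) * indicator S x \<le> ennreal (1 / (2 ^ 0 * r))" for x
      using S assms(3) by (auto simp: indicator_def intro!: ennreal_leI frac_le)
    fix k E assume "E \<subseteq> {x. 0 < ennreal (1 / norm x) * indicator S x \<and>
      (Suc k = N \<or> ennreal (1 / (2 ^ Suc k * r)) < ennreal (1 / norm x) * indicator S x)}"
    then have "E \<subseteq> S \<inter> cball 0 (2 ^ Suc k * r)"
      using inverse_norm_level_subset_cball[OF assms(3) S(1)] by (rule order_trans)
    then show "emeasure hausdorff1 E \<le> ennreal (2 * pi * (2 ^ Suc k * r))"
      using S(2) assms by (intro emeasure_hausdorff1_frontier_cball_le) auto
  qed
  also have "\<dots> = ennreal (4 * pi * N)"
    using assms(3) by (simp add: ennreal_of_nat_eq_real_of_nat flip: ennreal_mult)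
  finally show ?thesis unfolding S_def N .
qed

end
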